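(* For all integers $n\ge 2$ and $k\ge 0$, $$e(n,k)=e(n-2,k)+\binom{n-2}{k-1}+o(n-2,k-2),\qquad o(n,k)=o(n-2,k)+\binom{n-2}{k-1}+e(n-2,k-2),$$ where $e(m,k)=o(m,k)=0$ for $k<0$ and $\binom{m}{k}=0$ for $k<0$ or $k>m$.
   Context: For $S\subseteq\{1,\dots,n\}$ let $\sigma(S)$ be the sum of its elements; $S$ is called even if $\sigma(S)$ is even and odd otherwise (the empty set is even). A $k$-set is a subset with $k$ elements. $e(n,k)$ denotes the number of even $k$-subsets of $\{1,2,\dots,n\}$ and $o(n,k)$ the number of odd $k$-subsets of $\{1,2,\dots,n\}$ (both are $0$ if $k>n$). *)

theory Defs
  imports Main
begin

definition e_cnt :: "nat \<Rightarrow> int \<Rightarrow> nat" where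
  "e_cnt n k = (if k < 0 then 0 else
     card {S. S \<subseteq> {1..n} \<and> card S = nat k \<and> even (\<Sum>S)})"

definition o_cnt :: "nat \<Rightarrow> int \<Rightarrow> nat" where
  "o_cnt n k = (if k < 0 then 0 else
     card {S. S \<subseteq> {1..n} \<and> card S = nat k \<and> odd (\<Sum>S)})"

definition binom_int :: "nat \<Rightarrow> int \<Rightarrow> nat" where
  "binom_int m k = (if k < 0 then 0 else m choose (nat k))"

end

theory Submission
  imports Defs
begin

text \<open>Split the subsets of \<open>{1..n}\<close> according to which of the two largest elements
  \<open>n - 1\<close>, \<open>n\<close> they contain. Subsets containing exactly one of them are in bijection with the
  \<open>(k-1)\<close>-subsets of \<open>{1..n-2}\<close>, and since \<open>n - 1\<close> and \<open>n\<close> have opposite parities, each such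
  subset is counted once in total. Subsets containing both gain the odd amount \<open>2n - 1\<close>,
  which swaps the parity of a \<open>(k-2)\<close>-subset of \<open>{1..n-2}\<close>.\<close>

definition card_subsets_parity :: "'a :: semiring_parity set \<Rightarrow> int \<Rightarrow> bool \<Rightarrow> nat" where
  "card_subsets_parity A k p =
     (if k < 0 then 0 else card {S. S \<subseteq> A \<and> card S = nat k \<and> even (\<Sum>S) = p})"

lemma card_subsets_insert:
  assumes "finite A" "a \<notin> A"
  shows "card {S. S \<subseteq> insert a A \<and> P S}
       = card {S. S \<subseteq> A \<and> P S} + card {S. S \<subseteq> A \<and> P (insert a S)}"
proof -
  have split: "{S. S \<subseteq> insert a A \<and> P S}
      = {S. S \<subseteq> A \<and> P S} \<union> insert a ` {S. S \<subseteq> A \<and> P (insert a S)}"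
  proof (intro set_eqI iffI)
    fix S assume "S \<in> {S. S \<subseteq> insert a A \<and> P S}"
    then show "S \<in> {S. S \<subseteq> A \<and> P S} \<union> insert a ` {S. S \<subseteq> A \<and> P (insert a S)}"
      by (cases "a \<in> S")
        (auto simp: subset_insert_iff image_iff intro!: exI[of _ "S - {a}"] dest: insert_absorb)
  qed auto
  have "inj_on (insert a) {S. S \<subseteq> A \<and> P (insert a S)}"
    using assms(2) by (intro inj_onI) (metis Diff_insert_absorb in_mono mem_Collect_eq)
  moreover have "finite {S. S \<subseteq> A \<and> P S}" "finite {S. S \<subseteq> A \<and> P (insert a S)}"
    using assms(1) by auto
  moreover have "{S. S \<subseteq> A \<and> P S} \<inter> insert a ` {S. S \<subseteq> A \<and> P (insert a S)} = {}"
    using assms(2) by auto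
  ultimately show ?thesis
    unfolding split by (simp add: card_Un_disjoint card_image)
qed

lemma card_subsets_parity_insert:
  assumes "finite A" "a \<notin> A"
  shows "card_subsets_parity (insert a A) k p
       = card_subsets_parity A k p + card_subsets_parity A (k - 1) (p = even a)"
proof -
  have parity_insert: "(card (insert a S) = nat k \<and> even (\<Sum>(insert a S)) = p)
      \<longleftrightarrow> (k \<ge> 1 \<and> card S = nat (k - 1) \<and> even (\<Sum>S) = (p = even a))" if "S \<subseteq> A" for S
  proof -
    have "finite S" "a \<notin> S" using that assms finite_subset by auto
    then show ?thesis by auto
  qed
  then have subsets_eq: "{S. S \<subseteq> A \<and> card (insert a S) = nat k \<and> even (\<Sum>(insert a S)) = p}
      = {S. S \<subseteq> A \<and> k \<ge> 1 \<and> card S = nat (k - 1) \<and> even (\<Sum>S) = (p = even a)}"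
    by blast
  have count_insert:
    "card {S. S \<subseteq> A \<and> card (insert a S) = nat k \<and> even (\<Sum>(insert a S)) = p}
      = card_subsets_parity A (k - 1) (p = even a)"
    unfolding subsets_eq by (cases "k \<ge> 1") (simp_all add: card_subsets_parity_def)
  show ?thesis
  proof (cases "k < 0")
    case False
    then show ?thesis
      unfolding card_subsets_parity_def[of "insert a A"] card_subsets_parity_def[of A k]
      by (simp only: if_False card_subsets_insert[OF assms] count_insert)
  qed (simp add: card_subsets_parity_def)
qed

lemma card_subsets_parity_sum:
  assumes "finite A"
  shows "card_subsets_parity A k True + card_subsets_parity A k False = binom_int (card A) k"
proof (cases "k < 0")
  case False
  have "card {S. S \<subseteq> A \<and> card S = nat k \<and> even (\<Sum>S)}
      + card {S. S \<subseteq> A \<and> card S = nat k \<and> odd (\<Sum>S)}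
      = card {S. S \<subseteq> A \<and> card S = nat k}"
    using assms by (subst card_Un_disjoint[symmetric]) (auto intro: arg_cong[where f = card])
  then show ?thesis
    using False assms by (simp add: card_subsets_parity_def binom_int_def n_subsets)
qed (simp add: card_subsets_parity_def binom_int_def)

lemma card_subsets_parity_insert2:
  assumes "finite A" "a \<notin> A" "b \<notin> A" "odd (a + b)"
  shows "card_subsets_parity (insert a (insert b A)) k p
       = card_subsets_parity A k p + binom_int (card A) (k - 1)
         + card_subsets_parity A (k - 2) (\<not> p)"
proof -
  have "a \<noteq> b" using assms(4) by auto
  with assms have "card_subsets_parity (insert a (insert b A)) k p
      = card_subsets_parity A k p
        + (card_subsets_parity A (k - 1) (p = even b)
           + card_subsets_parity A (k - 1) (p = even a))
        + card_subsets_parity A (k - 2) ((p = even a) = even b)"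
    by (simp add: card_subsets_parity_insert algebra_simps)
  moreover have "even a \<longleftrightarrow> \<not> even b" using assms(4) by auto
  moreover have binom: "card_subsets_parity A (k - 1) q + card_subsets_parity A (k - 1) (\<not> q)
      = binom_int (card A) (k - 1)" for q
    using card_subsets_parity_sum[OF assms(1)] by (cases q) (simp_all add: add.commute)
  ultimately show ?thesis using binom[of p] binom[of "\<not> p"] by auto
qed

theorem lemma1p1:
  fixes n :: nat and k :: int
  assumes "n \<ge> 2" and "k \<ge> 0"
  shows "e_cnt n k = e_cnt (n - 2) k + binom_int (n - 2) (k - 1) + o_cnt (n - 2) (k - 2)
       \<and> o_cnt n k = o_cnt (n - 2) k + binom_int (n - 2) (k - 1) + e_cnt (n - 2) (k - 2)"
proof -
  have counts: "e_cnt m j = card_subsets_parity {1..m} j True"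
    "o_cnt m j = card_subsets_parity {1..m} j False" for m j
    by (simp_all add: e_cnt_def o_cnt_def card_subsets_parity_def)
  have interval: "{1..n} = insert n (insert (n - 1) {1..n - 2})"
    using assms(1) by auto
  have "odd (n + (n - 1))" using assms(1) by presburger
  then have "card_subsets_parity {1..n} k p
      = card_subsets_parity {1..n - 2} k p + binom_int (card {1..n - 2}) (k - 1)
        + card_subsets_parity {1..n - 2} (k - 2) (\<not> p)" for p
    unfolding interval by (intro card_subsets_parity_insert2) auto
  then show ?thesis unfolding counts by simp
qed

end
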